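(* Let $p$ be a prime and $b$ an integer with $0<b\le b^{-1}<p$. Write $p=bq+r$ with $0\le r<b$ and $p=b^{-1}s+t$ with $0\le t<b^{-1}$ (division algorithm). Then $\mathrm{inv}_{1,b}$ has 2 slopes if and only if $r=s$ and $q=t$.
   Context: Let $S=\mathbb{C}[x_1,x_2]$, $\zeta=e^{2\pi i/p}$, $G=\mathbb{Z}/p\mathbb{Z}=\langle\zeta\rangle$ acting on $S$ by $x_1\mapsto\zeta x_1$, $x_2\mapsto\zeta^bx_2$, with invariant ring $S^G_{1,b}$ (spanned by monomials $x_1^cx_2^d$ with $c+bd\equiv0\pmod p$). $\mathrm{inv}_{1,b}$ denotes the minimal set of monomial generators of $S^G_{1,b}$ as a $\mathbb{C}$-algebra: the nonconstant invariant monomials that are not a product of two nonconstant invariant monomials. $b^{-1}$ is the unique integer $0<b^{-1}<p$ with $bb^{-1}\equiv1\pmod p$. Writing $\mathrm{inv}_{1,b}=\{x_1^{c_0}x_2^{d_0},\dots,x_1^{c_n}x_2^{d_n}\}$ in lexicographic order with $x_1>x_2$, set $\mathrm{sl}_{1,b}=\left\{\frac{d_{i+1}-d_i}{c_{i+1}-c_i}\;\middle|\;0\le i\le n-1\right\}$, the set of slopes between consecutive exponent vectors; $\mathrm{inv}_{1,b}$ is said to have 2 slopes if $|\mathrm{sl}_{1,b}|=2$. *)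

theory Defs
  imports Complex_Main "HOL-Computational_Algebra.Primes"
begin

text \<open>Monomials x1^c x2^d are represented by their exponent vectors (c,d) :: nat \<times> nat.
  The monomial is invariant under the action x1 \<mapsto> \<zeta> x1, x2 \<mapsto> \<zeta>^b x2 iff c + b d \<equiv> 0 (mod p).\<close>

definition is_invariant :: "nat \<Rightarrow> nat \<Rightarrow> nat \<times> nat \<Rightarrow> bool" where
  "is_invariant p b m \<longleftrightarrow> (fst m + b * snd m) mod p = 0"

definition nonconst :: "nat \<times> nat \<Rightarrow> bool" where
  "nonconst m \<longleftrightarrow> m \<noteq> (0, 0)"

text \<open>inv_{1,b}: nonconstant invariant monomials that are not a product of two
  nonconstant invariant monomials (product = sum of exponent vectors).\<close>
definition inv_gens :: "nat \<Rightarrow> nat \<Rightarrow> (nat \<times> nat) set" where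
  "inv_gens p b = {m. is_invariant p b m \<and> nonconst m \<and>
     \<not> (\<exists>m1 m2. is_invariant p b m1 \<and> nonconst m1 \<and> is_invariant p b m2 \<and> nonconst m2 \<and>
              fst m = fst m1 + fst m2 \<and> snd m = snd m1 + snd m2)}"

definition lex_gt :: "nat \<times> nat \<Rightarrow> nat \<times> nat \<Rightarrow> bool" where
  "lex_gt m m' \<longleftrightarrow> fst m > fst m' \<or> (fst m = fst m' \<and> snd m > snd m')"

definition slope :: "nat \<times> nat \<Rightarrow> nat \<times> nat \<Rightarrow> rat" where
  "slope m m' = (of_nat (snd m') - of_nat (snd m)) / (of_nat (fst m') - of_nat (fst m))"

definition consecutive :: "(nat \<times> nat) set \<Rightarrow> nat \<times> nat \<Rightarrow> nat \<times> nat \<Rightarrow> bool" where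
  "consecutive S m m' \<longleftrightarrow> m \<in> S \<and> m' \<in> S \<and> lex_gt m m' \<and>
     \<not> (\<exists>h\<in>S. lex_gt m h \<and> lex_gt h m')"

definition slopes :: "nat \<Rightarrow> nat \<Rightarrow> rat set" where
  "slopes p b = {slope m m' | m m'. consecutive (inv_gens p b) m m'}"

definition binv :: "nat \<Rightarrow> nat \<Rightarrow> nat" where
  "binv p b = (THE x. 0 < x \<and> x < p \<and> (b * x) mod p = 1)"

end

theory Submission
  imports Defs "HOL-Number_Theory.Cong"
begin

text \<open>Let a be the inverse of b modulo p.  A monomial x1^c x2^d is invariant iff p divides
  c + b d, equivalently a c + d, so both weights c + b d and a c + d are at least p on
  nonconstant invariants, and an invariant of weight exactly p cannot split into two.  Hence
  the lattice points of the segment c + b d = p from (p, 0) to (r, q) and of the segment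
  a c + d = p from (0, p) to (s, t) are generators; they contribute the slopes -1/b and -a.
  Generators form an antichain, so consecutive ones have distinct first coordinates.

  If (r, q) = (s, t), every generator lies on one of the two segments, so only these two slopes
  occur.  Conversely, s > r is impossible since (r + 1, p - a (r + 1)) would have b-weight
  below p; and if s < r, the generator preceding (s, t) has first coordinate in (s, r], so a
  step of slope -a would leave the segment a c + d = p, while a step of slope -1/b would have
  horizontal length a positive multiple of b, although r < b.\<close>

lemma lex_gt_imp_fst_less:
  assumes "inj_on fst S" "m \<in> S" "m' \<in> S" "lex_gt m m'"
  shows "fst m' < fst m"
  using assms by (auto simp: lex_gt_def dest: inj_onD)

lemma consecutive_iff_no_fst_between:
  assumes "inj_on fst S" "m \<in> S" "m' \<in> S" "fst m' < fst m"
  shows "consecutive S m m' \<longleftrightarrow> \<not> (\<exists>h\<in>S. fst m' < fst h \<and> fst h < fst m)"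
  using assms by (auto simp: consecutive_def lex_gt_def dest: inj_onD)

lemma consecutive_predecessor_exists:
  assumes inj: "inj_on fst S" and "m \<in> S" "h \<in> S" "fst m < fst h"
  obtains m0 where "consecutive S m0 m" "fst m0 \<le> fst h"
proof -
  define c0 where "c0 = (LEAST c. c \<in> fst ` S \<and> fst m < c)"
  have "c0 \<le> fst h"
    unfolding c0_def by (rule Least_le) (use assms in auto)
  have "c0 \<in> fst ` S \<and> fst m < c0"
    unfolding c0_def by (rule LeastI[of _ "fst h"]) (use assms in auto)
  then obtain m0 where "m0 \<in> S" "fst m0 = c0" "fst m < c0" by auto
  moreover have "\<not> (\<exists>h'\<in>S. fst m < fst h' \<and> fst h' < c0)"
    unfolding c0_def using not_less_Least by blast
  ultimately have "consecutive S m0 m"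
    using consecutive_iff_no_fst_between[OF inj] \<open>m \<in> S\<close> by blast
  with \<open>fst m0 = c0\<close> \<open>c0 \<le> fst h\<close> show thesis by (intro that) auto
qed

lemma is_invariant_iff_dvd: "is_invariant p b (c, d) \<longleftrightarrow> p dvd c + b * d"
  by (simp add: is_invariant_def dvd_eq_mod_eq_0)

lemma inv_gensD: "m \<in> inv_gens p b \<Longrightarrow> is_invariant p b m \<and> m \<noteq> (0, 0)"
  by (simp add: inv_gens_def nonconst_def)

lemma inv_gens_indecomposable:
  assumes "(c, d) \<in> inv_gens p b"
    and "is_invariant p b (x, y)" "(x, y) \<noteq> (0, 0)" "is_invariant p b (x', y')" "(x', y') \<noteq> (0, 0)"
    and "c = x + x'" "d = y + y'"
  shows False
  using assms unfolding inv_gens_def nonconst_def by fastforce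

lemma inv_gens_minimal:
  assumes gen: "(c, d) \<in> inv_gens p b" and "is_invariant p b (x, y)" "(x, y) \<noteq> (0, 0)"
    and "x \<le> c" "y \<le> d"
  shows "(x, y) = (c, d)"
proof (rule ccontr)
  assume ne: "(x, y) \<noteq> (c, d)"
  have "b * y \<le> b * d" using \<open>y \<le> d\<close> by simp
  then have "c + b * d = (x + b * y) + ((c - x) + b * (d - y))"
    using \<open>x \<le> c\<close> unfolding diff_mult_distrib2 by linarith
  then have "is_invariant p b (c - x, d - y)"
    using inv_gensD[OF gen] \<open>is_invariant p b (x, y)\<close>
    by (simp add: is_invariant_iff_dvd dvd_add_right_iff)
  moreover have "(c - x, d - y) \<noteq> (0, 0)"
    using ne \<open>x \<le> c\<close> \<open>y \<le> d\<close> by auto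
  ultimately show False
    by (rule inv_gens_indecomposable[OF gen assms(2,3)]) (use assms(4,5) in simp_all)
qed

lemma inj_on_fst_inv_gens: "inj_on fst (inv_gens p b)"
proof (rule inj_onI)
  fix m m' assume m: "m \<in> inv_gens p b" and m': "m' \<in> inv_gens p b" and "fst m = fst m'"
  then obtain c d d' where eq: "m = (c, d)" "m' = (c, d')"
    by (metis prod.collapse)
  show "m = m'"
  proof (cases "d \<le> d'")
    case True
    then show ?thesis using inv_gens_minimal[of c d' p b c d] m m' inv_gensD eq by auto
  next
    case False
    then show ?thesis using inv_gens_minimal[of c d p b c d'] m m' inv_gensD eq by auto
  qed
qed

lemma inv_gensI_weight:
  assumes weight: "\<And>x y. is_invariant p b (x, y) \<Longrightarrow> (x, y) \<noteq> (0, 0) \<Longrightarrow> p \<le> u * x + v * y"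
    and "is_invariant p b (c, d)" "(c, d) \<noteq> (0, 0)" "u * c + v * d = p" "0 < p"
  shows "(c, d) \<in> inv_gens p b"
  unfolding inv_gens_def nonconst_def
proof (intro CollectI conjI notI)
  assume "\<exists>m1 m2. is_invariant p b m1 \<and> m1 \<noteq> (0, 0) \<and> is_invariant p b m2 \<and> m2 \<noteq> (0, 0) \<and>
    fst (c, d) = fst m1 + fst m2 \<and> snd (c, d) = snd m1 + snd m2"
  then obtain x y x' y' where "is_invariant p b (x, y)" "(x, y) \<noteq> (0, 0)"
    "is_invariant p b (x', y')" "(x', y') \<noteq> (0, 0)" "c = x + x'" "d = y + y'"
    by auto
  then have "2 * p \<le> u * c + v * d"
    using weight[of x y] weight[of x' y'] by (simp add: algebra_simps)
  then show False using assms(4,5) by simp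
qed (use assms(2,3) in auto)

lemma slope_eq_neg_inverse_iff:
  assumes "fst m \<noteq> fst m'" "0 < k"
  shows "slope m m' = - 1 / of_nat k \<longleftrightarrow> fst m + k * snd m = fst m' + k * snd m'"
proof -
  have "slope m m' = - 1 / of_nat k \<longleftrightarrow>
      (of_nat (fst m + k * snd m) :: rat) = of_nat (fst m' + k * snd m')"
    using assms unfolding slope_def by (simp add: field_simps) linarith
  then show ?thesis by (simp only: of_nat_eq_iff)
qed

lemma slope_eq_neg_iff:
  assumes "fst m \<noteq> fst m'"
  shows "slope m m' = - of_nat k \<longleftrightarrow> k * fst m + snd m = k * fst m' + snd m'"
proof -
  have "slope m m' = - of_nat k \<longleftrightarrow>
      (of_nat (k * fst m + snd m) :: rat) = of_nat (k * fst m' + snd m')"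
    using assms unfolding slope_def by (simp add: field_simps) linarith
  then show ?thesis by (simp only: of_nat_eq_iff)
qed

lemma slope_in_slopes: "consecutive (inv_gens p b) m m' \<Longrightarrow> slope m m' \<in> slopes p b"
  unfolding slopes_def by blast

locale inverse_pair =
  fixes p b a :: nat
  assumes b_less: "b < p" and a_less: "a < p" and inverse: "(b * a) mod p = 1"
begin

lemma b_pos: "0 < b" and a_pos: "0 < a"
  using inverse by (auto intro: ccontr)

lemma p_gt_1: "1 < p"
  using inverse b_less by (cases "p = 1") auto

lemma is_invariant_iff_dvd_dual: "is_invariant p b (c, d) \<longleftrightarrow> p dvd a * c + d"
proof -
  have ba: "[b * a = 1] (mod p)"
    using inverse p_gt_1 by (simp add: cong_def)
  have "[a * c + b * a * d = a * c + 1 * d] (mod p)"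
    by (intro cong_add cong_refl cong_scalar_right ba)
  then have dual: "[a * (c + b * d) = a * c + d] (mod p)"
    by (simp add: algebra_simps)
  have "[b * a * c + b * d = 1 * c + b * d] (mod p)"
    by (intro cong_add cong_refl cong_scalar_right ba)
  then have "[b * (a * c + d) = c + b * d] (mod p)"
    by (simp add: algebra_simps)
  with dual show ?thesis
    unfolding is_invariant_iff_dvd using cong_dvd_iff dvd_mult by blast
qed

lemma b_weight_ge: "is_invariant p b (c, d) \<Longrightarrow> (c, d) \<noteq> (0, 0) \<Longrightarrow> p \<le> c + b * d"
  using b_pos by (auto simp: is_invariant_iff_dvd intro: dvd_imp_le)

lemma a_weight_ge: "is_invariant p b (c, d) \<Longrightarrow> (c, d) \<noteq> (0, 0) \<Longrightarrow> p \<le> a * c + d"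
  using a_pos by (auto simp: is_invariant_iff_dvd_dual intro: dvd_imp_le)

lemma inv_gens_b_lineI:
  assumes "c + b * d = p"
  shows "(c, d) \<in> inv_gens p b"
proof (rule inv_gensI_weight[of p b 1 b])
  show "(c, d) \<noteq> (0, 0)" using assms p_gt_1 by auto
qed (use assms b_weight_ge p_gt_1 in \<open>auto simp: is_invariant_iff_dvd\<close>)

lemma inv_gens_a_lineI:
  assumes "a * c + d = p"
  shows "(c, d) \<in> inv_gens p b"
proof (rule inv_gensI_weight[of p b a 1])
  show "(c, d) \<noteq> (0, 0)" using assms p_gt_1 by (auto simp del: prod.inject)
qed (use assms a_weight_ge p_gt_1 in \<open>auto simp: is_invariant_iff_dvd_dual\<close>)

lemma inv_gens_on_b_line:
  assumes gen: "(c, d) \<in> inv_gens p b" and "b * d \<le> p"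
  shows "c + b * d = p"
proof -
  have "(p - b * d, d) \<in> inv_gens p b"
    using \<open>b * d \<le> p\<close> by (intro inv_gens_b_lineI) simp
  moreover have "p - b * d \<le> c"
    using b_weight_ge inv_gensD[OF gen] by fastforce
  ultimately have "(p - b * d, d) = (c, d)"
    using inv_gensD inv_gens_minimal[OF gen] by blast
  then show ?thesis using \<open>b * d \<le> p\<close> by simp
qed

lemma inv_gens_on_a_line:
  assumes gen: "(c, d) \<in> inv_gens p b" and "a * c \<le> p"
  shows "a * c + d = p"
proof -
  have "(c, p - a * c) \<in> inv_gens p b"
    using \<open>a * c \<le> p\<close> by (intro inv_gens_a_lineI) simp
  moreover have "p - a * c \<le> d"
    using a_weight_ge inv_gensD[OF gen] by fastforce
  ultimately have "(c, p - a * c) = (c, d)"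
    using inv_gensD inv_gens_minimal[OF gen] by blast
  then show ?thesis using \<open>a * c \<le> p\<close> by simp
qed

lemma neg_inverse_in_slopes: "- 1 / of_nat b \<in> slopes p b"
proof -
  have gens: "(p, 0) \<in> inv_gens p b" "(p - b, 1) \<in> inv_gens p b"
    using b_less by (auto intro: inv_gens_b_lineI)
  have "\<not> (\<exists>h\<in>inv_gens p b. p - b < fst h \<and> fst h < p)"
  proof
    assume "\<exists>h\<in>inv_gens p b. p - b < fst h \<and> fst h < p"
    then obtain c d where gen: "(c, d) \<in> inv_gens p b" and "p - b < c" "c < p"
      by auto
    then have "0 < d"
      using b_weight_ge[of c d] inv_gensD[OF gen] by (cases d) auto
    then have "(p - b, 1) = (c, d)"
      using inv_gens_minimal[OF gen] inv_gensD[OF gens(2)] \<open>p - b < c\<close> by simp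
    then show False using \<open>p - b < c\<close> by simp
  qed
  then have "consecutive (inv_gens p b) (p, 0) (p - b, 1)"
    using consecutive_iff_no_fst_between[OF inj_on_fst_inv_gens gens] b_pos b_less by simp
  moreover have "slope (p, 0) (p - b, 1) = - 1 / of_nat b"
    using slope_eq_neg_inverse_iff b_pos b_less by simp
  ultimately show ?thesis
    using slope_in_slopes by metis
qed

lemma neg_in_slopes: "- of_nat a \<in> slopes p b"
proof -
  have gens: "(1, p - a) \<in> inv_gens p b" "(0, p) \<in> inv_gens p b"
    using a_less by (auto intro: inv_gens_a_lineI)
  then have "consecutive (inv_gens p b) (1, p - a) (0, p)"
    using consecutive_iff_no_fst_between[OF inj_on_fst_inv_gens gens] by auto
  moreover have "slope (1, p - a) (0, p) = - of_nat a"
    using slope_eq_neg_iff a_less by simp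
  ultimately show ?thesis
    using slope_in_slopes by metis
qed

lemma slopes_subset_if_corner:
  assumes eb: "p = b * q + r" and ea: "p = a * r + q"
  shows "slopes p b \<subseteq> {- 1 / of_nat b, - of_nat a}"
proof
  fix \<sigma> assume "\<sigma> \<in> slopes p b"
  then obtain m m' where cons: "consecutive (inv_gens p b) m m'" and \<sigma>: "\<sigma> = slope m m'"
    unfolding slopes_def by blast
  then have gens: "m \<in> inv_gens p b" "m' \<in> inv_gens p b" and "lex_gt m m'"
    by (auto simp: consecutive_def)
  then have "fst m' < fst m"
    by (rule lex_gt_imp_fst_less[OF inj_on_fst_inv_gens])
  have corner: "(r, q) \<in> inv_gens p b"
    using eb by (intro inv_gens_b_lineI) simp
  have b_line: "fst h + b * snd h = p" if "h \<in> inv_gens p b" "r \<le> fst h" for h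
  proof (cases "snd h \<le> q")
    case True
    then have "b * snd h \<le> p" using eb by (simp add: trans_le_add1)
    then show ?thesis using inv_gens_on_b_line \<open>h \<in> inv_gens p b\<close> by (metis prod.collapse)
  next
    case False
    then show ?thesis
      using inv_gens_minimal[of "fst h" "snd h" p b r q] that inv_gensD[OF corner] by auto
  qed
  have a_line: "a * fst h + snd h = p" if "h \<in> inv_gens p b" "fst h \<le> r" for h
  proof -
    have "a * fst h \<le> p" using that ea by (simp add: trans_le_add1)
    then show ?thesis using inv_gens_on_a_line \<open>h \<in> inv_gens p b\<close> by (metis prod.collapse)
  qed
  consider "r \<le> fst m'" | "fst m \<le> r" | "fst m' < r \<and> r < fst m" by linarith
  then show "\<sigma> \<in> {- 1 / of_nat b, - of_nat a}"
  proof cases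
    case 1
    then have "\<sigma> = - 1 / of_nat b"
      using \<sigma> slope_eq_neg_inverse_iff b_pos b_line gens \<open>fst m' < fst m\<close> by simp
    then show ?thesis by simp
  next
    case 2
    then have "\<sigma> = - of_nat a"
      using \<sigma> slope_eq_neg_iff a_line gens \<open>fst m' < fst m\<close> by simp
    then show ?thesis by simp
  next
    case 3
    then show ?thesis
      using cons consecutive_iff_no_fst_between[OF inj_on_fst_inv_gens gens] corner by auto
  qed
qed

lemma corner_if_slopes_subset:
  assumes "2 \<le> b" and two_slopes: "slopes p b \<subseteq> {- 1 / of_nat b, - of_nat a}"
  shows "p mod b = p div a \<and> p div b = p mod a"
proof -
  define q r s t where "q = p div b" and "r = p mod b" and "s = p div a" and "t = p mod a"
  have eb: "r + b * q = p" and ea: "a * s + t = p" and "r < b" "t < a"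
    using b_pos a_pos by (simp_all add: q_def r_def s_def t_def)
  have gens: "(r, q) \<in> inv_gens p b" "(s, t) \<in> inv_gens p b"
    using inv_gens_b_lineI[OF eb] inv_gens_a_lineI[OF ea] .
  have "\<not> s < r"
  proof
    assume "s < r"
    then obtain m0 where cons: "consecutive (inv_gens p b) m0 (s, t)" and "fst m0 \<le> r"
      using consecutive_predecessor_exists[OF inj_on_fst_inv_gens gens(2,1)] by auto
    then have "m0 \<in> inv_gens p b" "s < fst m0"
      using lex_gt_imp_fst_less[OF inj_on_fst_inv_gens _ gens(2)] by (auto simp: consecutive_def)
    have "slope m0 (s, t) \<in> {- 1 / of_nat b, - of_nat a}"
      using two_slopes slope_in_slopes[OF cons] by blast
    then show False
    proof
      assume "slope m0 (s, t) = - 1 / of_nat b"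
      then have "fst m0 + b * snd m0 = s + b * t"
        using slope_eq_neg_inverse_iff b_pos \<open>s < fst m0\<close> by simp
      then have "fst m0 - s = b * (t - snd m0)"
        unfolding diff_mult_distrib2 by linarith
      moreover have "0 < fst m0 - s" "fst m0 - s < b"
        using \<open>s < fst m0\<close> \<open>fst m0 \<le> r\<close> \<open>r < b\<close> by linarith+
      ultimately show False
        using nat_dvd_not_less by (metis dvd_triv_left)
    next
      assume "slope m0 (s, t) \<in> {- of_nat a}"
      then have "a * fst m0 + snd m0 = a * s + t"
        using slope_eq_neg_iff \<open>s < fst m0\<close> by simp
      moreover have "a * (s + 1) \<le> a * fst m0"
        using \<open>s < fst m0\<close> by (intro mult_le_mono2) simp
      ultimately show False
        using \<open>t < a\<close> by (simp add: algebra_simps)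
    qed
  qed
  moreover have "\<not> r < s"
  proof
    assume "r < s"
    then have "a * (r + 1) \<le> p"
      using ea mult_le_mono2[of "r + 1" s a] by linarith
    then have gen: "(r + 1, p - a * (r + 1)) \<in> inv_gens p b"
      by (intro inv_gens_a_lineI) simp
    show False
    proof (cases "q \<le> p - a * (r + 1)")
      case True
      then show False
        using inv_gens_minimal[OF gen] inv_gensD[OF gens(1)] by fastforce
    next
      case False
      then have "b * (p - a * (r + 1) + 1) \<le> b * q"
        by (intro mult_le_mono2) simp
      then have "(r + 1) + b * (p - a * (r + 1)) < p"
        using eb \<open>2 \<le> b\<close> by (simp add: algebra_simps)
      then show False
        using b_weight_ge inv_gensD[OF gen] by fastforce
    qed
  qed
  ultimately have "(r, q) = (s, t)"
    using inj_onD[OF inj_on_fst_inv_gens _ gens] by simp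
  then show ?thesis
    by (simp add: q_def r_def s_def t_def)
qed

lemma neg_inverse_ne_neg:
  assumes "2 \<le> b"
  shows "- 1 / of_nat b \<noteq> (- of_nat a :: rat)"
proof -
  have "1 < a * b"
    using a_pos assms mult_le_mono[of 1 a 2 b] by linarith
  then have "(1 :: rat) / of_nat b < of_nat a"
    using b_pos by (simp add: divide_less_eq flip: of_nat_mult)
  then show ?thesis
    by (auto simp: minus_divide_left[symmetric])
qed

lemma slopes_subset_iff_corner:
  assumes "2 \<le> b"
  shows "slopes p b \<subseteq> {- 1 / of_nat b, - of_nat a} \<longleftrightarrow> p mod b = p div a \<and> p div b = p mod a"
proof
  assume corner: "p mod b = p div a \<and> p div b = p mod a"
  have "p = b * (p div b) + p mod b" by simp
  moreover have "p = a * (p mod b) + p div b" using corner by simp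
  ultimately show "slopes p b \<subseteq> {- 1 / of_nat b, - of_nat a}"
    by (rule slopes_subset_if_corner)
qed (rule corner_if_slopes_subset[OF assms])

end

lemma card_superset_eq_iff:
  assumes "finite A" "A \<subseteq> S" "card A \<noteq> 0"
  shows "card S = card A \<longleftrightarrow> S \<subseteq> A"
proof
  assume "card S = card A"
  moreover from this have "finite S"
    using assms(3) card.infinite by force
  ultimately show "S \<subseteq> A"
    using card_subset_eq[OF _ assms(2)] by auto
qed (use assms(2) in \<open>simp add: subset_antisym\<close>)

lemma binv_inverse:
  assumes "coprime b p" "1 < p"
  shows "(b * binv p b) mod p = 1"
proof -
  obtain x where "[b * x = 1] (mod p)"
    using cong_solve_coprime_nat[OF assms(1)] by auto
  then have x: "(b * (x mod p)) mod p = 1"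
    using assms(2) by (simp add: cong_def mod_mult_right_eq)
  have "binv p b = x mod p"
    unfolding binv_def
  proof (rule the_equality)
    show "0 < x mod p \<and> x mod p < p \<and> b * (x mod p) mod p = 1"
      using x assms(2) by (auto intro: ccontr)
    fix z assume z: "0 < z \<and> z < p \<and> b * z mod p = 1"
    then have "[b * z = b * (x mod p)] (mod p)"
      using x by (simp add: cong_def)
    then have "[z = x mod p] (mod p)"
      using cong_mult_lcancel_nat[OF assms(1)] by blast
    then show "z = x mod p"
      using z by (simp add: cong_def)
  qed
  then show ?thesis using x by simp
qed

theorem theorem6p2:
  fixes p b :: nat
  assumes "prime p" and "0 < b" and "b \<le> binv p b" and "binv p b < p"
  shows "card (slopes p b) = 2 \<longleftrightarrow>
           (p mod b = p div (binv p b) \<and> p div b = p mod (binv p b))"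
proof -
  have "b < p" using assms(3,4) by linarith
  have "\<not> p dvd b"
    using assms(2) \<open>b < p\<close> by (auto dest: dvd_imp_le)
  then have "coprime b p"
    using prime_imp_coprime[OF assms(1)] by (simp add: coprime_commute)
  then interpret inverse_pair p b "binv p b"
    using \<open>b < p\<close> assms(4) binv_inverse prime_gt_1_nat[OF assms(1)] by unfold_locales blast+
  show ?thesis
  proof (cases "b = 1")
    case True
    then have "binv p b = 1" using inverse a_less by simp
    then have "slopes p b \<subseteq> {- 1}"
      using slopes_subset_if_corner[of p 0] True by simp
    then have "card (slopes p b) \<le> card {- 1 :: rat}"
      by (intro card_mono) auto
    then show ?thesis using True \<open>binv p b = 1\<close> p_gt_1 by simp
  next
    case False
    then have "2 \<le> b" using b_pos by simp
    then have "card {- 1 / of_nat b, - of_nat (binv p b) :: rat} = 2"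
      using neg_inverse_ne_neg by simp
    then show ?thesis
      using card_superset_eq_iff[of "{- 1 / of_nat b, - of_nat (binv p b)}" "slopes p b"]
        neg_inverse_in_slopes neg_in_slopes slopes_subset_iff_corner[OF \<open>2 \<le> b\<close>]
      by simp
  qed
qed

end
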